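(* Let $q\ge 2$, $r\ge 1$, $\rho\ge 2$ be integers and $N=r+\rho-1$. Assume that there exists a $q$-ary MDS code of length $N$ and minimum distance $\rho$. Then $R_q(r,\rho,0)=\frac{r}{N}$.
   Context: A $q$-ary code of length $n$ is a subset $\mathcal{C}\subseteq Q^n$, $|Q|=q$, with minimum distance the minimum Hamming distance between distinct codewords and dimension $k=\log_q|\mathcal{C}|$. For $I\subseteq[n]$, $\mathcal{C}_I$ is the projection onto coordinates in $I$. $\mathcal{C}$ is an $(n,k,r,\rho)$ LRC code if every coordinate $i\in[n]$ lies in a subset $\mathcal{R}_i$ of size at most $r+\rho-1$ with $\mathcal{C}_{\mathcal{R}_i}$ of minimum distance at least $\rho$. Let $M_q(n,r,\rho,\delta n)$ be the maximum cardinality of a $q$-ary $(n,k,r,\rho)$ LRC code with minimum distance $\delta n$, and $R_q(r,\rho,\delta)=\limsup_{n\to\infty}\frac1n\log_q M_q(n,r,\rho,\delta n)$. An MDS code of length $N$ and distance $\rho$ is a $q$-ary code of length $N$, minimum distance $\rho$ and cardinality $q^{N-\rho+1}$. *)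

theory Defs
  imports Complex_Main "HOL-Library.Liminf_Limsup" "HOL-Library.Extended_Real"
begin

definition words :: "nat \<Rightarrow> nat \<Rightarrow> nat list set" where
  "words q n = {xs. length xs = n \<and> set xs \<subseteq> {..<q}}"

definition is_code :: "nat \<Rightarrow> nat \<Rightarrow> nat list set \<Rightarrow> bool" where
  "is_code q n C \<longleftrightarrow> C \<subseteq> words q n"

definition hdist_on :: "nat set \<Rightarrow> nat list \<Rightarrow> nat list \<Rightarrow> nat" where
  "hdist_on I x y = card {i \<in> I. x ! i \<noteq> y ! i}"

definition hdist :: "nat list \<Rightarrow> nat list \<Rightarrow> nat" where
  "hdist x y = hdist_on {..<length x} x y"

definition min_dist :: "nat list set \<Rightarrow> nat" where
  "min_dist C = Min {hdist x y | x y. x \<in> C \<and> y \<in> C \<and> x \<noteq> y}"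

text \<open>Minimum distance at least d (d real, vacuous for codes with at most one word).\<close>
definition min_dist_ge :: "real \<Rightarrow> nat list set \<Rightarrow> bool" where
  "min_dist_ge d C \<longleftrightarrow> (\<forall>x\<in>C. \<forall>y\<in>C. x \<noteq> y \<longrightarrow> d \<le> real (hdist x y))"

text \<open>(n,k,r,rho) LRC code (k = log_q |C|, so C nonempty): every coordinate i lies
in a set R_i of size at most r+rho-1 such that the projection of C onto R_i has
minimum distance at least rho.\<close>
definition is_LRC :: "nat \<Rightarrow> nat \<Rightarrow> nat \<Rightarrow> nat \<Rightarrow> nat list set \<Rightarrow> bool" where
  "is_LRC q n r \<rho> C \<longleftrightarrow> is_code q n C \<and> C \<noteq> {} \<and>
     (\<forall>i<n. \<exists>R. i \<in> R \<and> R \<subseteq> {..<n} \<and> card R \<le> r + \<rho> - 1 \<and>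
        (\<forall>x\<in>C. \<forall>y\<in>C. hdist_on R x y \<noteq> 0 \<longrightarrow> \<rho> \<le> hdist_on R x y))"

definition M_LRC :: "nat \<Rightarrow> nat \<Rightarrow> nat \<Rightarrow> nat \<Rightarrow> real \<Rightarrow> nat" where
  "M_LRC q n r \<rho> d = Max (card ` {C. is_LRC q n r \<rho> C \<and> min_dist_ge d C})"

definition R_LRC :: "nat \<Rightarrow> nat \<Rightarrow> nat \<Rightarrow> real \<Rightarrow> ereal" where
  "R_LRC q r \<rho> \<delta> = limsup (\<lambda>n. ereal (log (real q) (real (M_LRC q n r \<rho> (\<delta> * real n))) / real n))"

definition is_MDS :: "nat \<Rightarrow> nat \<Rightarrow> nat \<Rightarrow> nat list set \<Rightarrow> bool" where
  "is_MDS q N \<rho> C \<longleftrightarrow> is_code q N C \<and> min_dist C = \<rho> \<and> card C = q ^ (N - \<rho> + 1)"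

end

theory Submission
  imports Defs "HOL-Library.FuncSet"
begin

text \<open>
  Upper bound: reveal the coordinates of an LRC one repair group \<open>R\<close> at a time. If \<open>S\<close> is
  already revealed, the codewords with a fixed projection onto \<open>S\<close> have projections onto
  \<open>R - S\<close> at pairwise distance at least \<open>\<rho>\<close>, so by the Singleton bound the \<open>t = |R - S|\<close> new
  coordinates allow at most \<open>q^(t+1-\<rho>) \<le> q^(t r / N)\<close> continuations, \<open>N = r + \<rho> - 1\<close>, as
  \<open>t \<le> N\<close>. Hence \<open>|C|^N \<le> q^(n r)\<close>. Lower bound: concatenating \<open>m\<close> codewords of an MDS code
  of length \<open>N\<close> gives an LRC of length \<open>m N\<close> with \<open>q^(m r)\<close> codewords, so the rate
  \<open>r / N\<close> is attained along the lengths \<open>m N\<close> and is the limsup.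
\<close>

definition proj_on :: "nat set \<Rightarrow> nat list \<Rightarrow> nat \<Rightarrow> nat" where
  "proj_on S x = restrict ((!) x) S"

lemma proj_on_eq_iff: "proj_on S x = proj_on S y \<longleftrightarrow> (\<forall>i\<in>S. x ! i = y ! i)"
  by (auto simp: proj_on_def fun_eq_iff restrict_def)

lemma proj_on_eq_iff_hdist_on:
  "finite S \<Longrightarrow> proj_on S x = proj_on S y \<longleftrightarrow> hdist_on S x y = 0"
  by (auto simp: proj_on_eq_iff hdist_on_def)

lemma proj_on_in_PiE: "\<forall>i\<in>S. x ! i < q \<Longrightarrow> proj_on S x \<in> PiE S (\<lambda>_. {..<q})"
  by (simp add: proj_on_def)

lemma card_image_le_card_image_if_factors:
  assumes "finite (g ` A)" and "\<And>x y. x \<in> A \<Longrightarrow> y \<in> A \<Longrightarrow> g x = g y \<Longrightarrow> f x = f y"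
  shows "card (f ` A) \<le> card (g ` A)"
proof -
  have "f ` A = (\<lambda>v. f (inv_into A g v)) ` g ` A"
    unfolding image_image
    by (rule image_cong[OF refl], rule sym, rule assms(2))
      (auto intro: inv_into_into f_inv_into_f)
  then show ?thesis
    using card_image_le[OF assms(1)] by simp
qed

lemma card_proj_on_le:
  fixes F :: "nat list set"
  assumes "finite T" and "1 \<le> \<rho>"
    and alphabet: "\<forall>x\<in>F. \<forall>i\<in>T. x ! i < q"
    and dist: "\<forall>x\<in>F. \<forall>y\<in>F. hdist_on T x y \<noteq> 0 \<longrightarrow> \<rho> \<le> hdist_on T x y"
  shows "card (proj_on T ` F) \<le> q ^ (card T + 1 - \<rho>)"
proof -
  have "card T + 1 - \<rho> \<le> card T"
    using \<open>1 \<le> \<rho>\<close> by simp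
  then obtain T' where T': "T' \<subseteq> T" "card T' = card T + 1 - \<rho>" "finite T'"
    by (rule obtain_subset_with_card_n)
  have "proj_on T x = proj_on T y"
    if "x \<in> F" "y \<in> F" "proj_on T' x = proj_on T' y" for x y
  proof -
    have "{i \<in> T. x ! i \<noteq> y ! i} \<subseteq> T - T'"
      using that(3) by (auto simp: proj_on_eq_iff)
    then have "hdist_on T x y \<le> card (T - T')"
      unfolding hdist_on_def using \<open>finite T\<close> by (simp add: card_mono)
    also have "\<dots> = card T - card T'"
      by (rule card_Diff_subset[OF T'(3,1)])
    finally have "hdist_on T x y < \<rho>"
      using T'(2) \<open>1 \<le> \<rho>\<close> by linarith
    then have "hdist_on T x y = 0"
      using dist that(1,2) by (meson not_le)
    then show ?thesis
      using \<open>finite T\<close> by (simp add: proj_on_eq_iff_hdist_on)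
  qed
  then have "card (proj_on T ` F) \<le> card (proj_on T' ` F)"
  proof (rule card_image_le_card_image_if_factors[rotated])
    have "proj_on T' ` F \<subseteq> PiE T' (\<lambda>_. {..<q})"
      using alphabet T'(1) by (auto intro!: proj_on_in_PiE)
    moreover have "finite (PiE T' (\<lambda>_. {..<q}))"
      using \<open>finite T'\<close> by (simp add: finite_PiE)
    ultimately show "finite (proj_on T' ` F)"
      by (rule finite_subset)
  qed
  also have "\<dots> \<le> card (PiE T' (\<lambda>_. {..<q}))"
    using alphabet T'(1) \<open>finite T'\<close> by (intro card_mono) (auto intro!: proj_on_in_PiE simp: finite_PiE)
  also have "\<dots> = q ^ (card T + 1 - \<rho>)"
    using \<open>finite T'\<close> T'(2) by (simp add: card_PiE)
  finally show ?thesis .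
qed

lemma card_proj_on_Un_le:
  fixes C :: "nat list set"
  assumes "finite C" and "finite R" and "1 \<le> \<rho>"
    and "\<forall>x\<in>C. \<forall>i\<in>R. x ! i < q"
    and dist: "\<forall>x\<in>C. \<forall>y\<in>C. hdist_on R x y \<noteq> 0 \<longrightarrow> \<rho> \<le> hdist_on R x y"
  shows "card (proj_on (S \<union> R) ` C) \<le> card (proj_on S ` C) * q ^ (card (R - S) + 1 - \<rho>)"
proof -
  define fiber where "fiber u = {x \<in> C. proj_on S x = u}" for u
  have fiber_bound: "card (proj_on (S \<union> R) ` fiber u) \<le> q ^ (card (R - S) + 1 - \<rho>)" for u
  proof -
    have agree: "x ! i = y ! i" if "x \<in> fiber u" "y \<in> fiber u" "i \<in> S" for x y i
      using that by (auto simp: fiber_def proj_on_eq_iff)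
    have "card (proj_on (S \<union> R) ` fiber u) \<le> card (proj_on (R - S) ` fiber u)"
    proof (rule card_image_le_card_image_if_factors)
      show "finite (proj_on (R - S) ` fiber u)"
        using \<open>finite C\<close> by (simp add: fiber_def)
    next
      fix x y assume "x \<in> fiber u" "y \<in> fiber u" "proj_on (R - S) x = proj_on (R - S) y"
      then show "proj_on (S \<union> R) x = proj_on (S \<union> R) y"
        using agree by (auto simp: proj_on_eq_iff)
    qed
    also have "\<dots> \<le> q ^ (card (R - S) + 1 - \<rho>)"
    proof (rule card_proj_on_le)
      have "hdist_on (R - S) x y = hdist_on R x y" if "x \<in> fiber u" "y \<in> fiber u" for x y
      proof -
        have "{i \<in> R - S. x ! i \<noteq> y ! i} = {i \<in> R. x ! i \<noteq> y ! i}"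
          using agree[OF that] by blast
        then show ?thesis
          by (simp add: hdist_on_def)
      qed
      then show "\<forall>x\<in>fiber u. \<forall>y\<in>fiber u. hdist_on (R - S) x y \<noteq> 0 \<longrightarrow> \<rho> \<le> hdist_on (R - S) x y"
        using dist by (simp add: fiber_def)
    qed (use assms in \<open>auto simp: fiber_def\<close>)
    finally show ?thesis .
  qed
  have fibers: "proj_on (S \<union> R) ` C = (\<Union>u \<in> proj_on S ` C. proj_on (S \<union> R) ` fiber u)"
    by (auto simp: fiber_def)
  have "card (proj_on (S \<union> R) ` C) \<le> (\<Sum>u \<in> proj_on S ` C. card (proj_on (S \<union> R) ` fiber u))"
    unfolding fibers by (rule card_UN_le) (use \<open>finite C\<close> in simp)
  also have "\<dots> \<le> (\<Sum>u \<in> proj_on S ` C. q ^ (card (R - S) + 1 - \<rho>))"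
    by (rule sum_mono) (rule fiber_bound)
  finally show ?thesis
    by simp
qed

lemma repair_group_exponent_le:
  fixes t r \<rho> :: nat
  assumes "1 \<le> \<rho>" and "t \<le> r + \<rho> - 1"
  shows "(t + 1 - \<rho>) * (r + \<rho> - 1) \<le> t * r"
proof -
  obtain p where p: "\<rho> = Suc p"
    using \<open>1 \<le> \<rho>\<close> by (cases \<rho>) auto
  show ?thesis
  proof (cases "p \<le> t")
    case True
    then obtain s where t: "t = p + s"
      by (auto dest: le_Suc_ex)
    have "s \<le> r"
      using assms(2) t p by simp
    then have "s * (r + p) \<le> (p + s) * r"
      using mult_le_mono1[of s r p] by (simp add: algebra_simps)
    then show ?thesis
      using t p by simp
  qed (simp add: p)
qed

lemma finite_words: "finite (words q n)"
  unfolding words_def using finite_lists_length_eq[of "{..<q}" n] by (simp add: conj_commute)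

lemma words_nth_less: "x \<in> words q n \<Longrightarrow> i < n \<Longrightarrow> x ! i < q"
  unfolding words_def using nth_mem by fastforce

lemma inj_on_proj_on_words: "inj_on (proj_on {..<n}) (words q n)"
  by (rule inj_onI) (auto intro: nth_equalityI simp: words_def proj_on_eq_iff)

lemma card_proj_on_Un_pow_le:
  assumes "C \<subseteq> words q n" and "R \<subseteq> {..<n}" and "card R \<le> r + \<rho> - 1"
    and "0 < q" and "1 \<le> \<rho>"
    and "\<forall>x\<in>C. \<forall>y\<in>C. hdist_on R x y \<noteq> 0 \<longrightarrow> \<rho> \<le> hdist_on R x y"
  shows "card (proj_on (S \<union> R) ` C) ^ (r + \<rho> - 1)
    \<le> card (proj_on S ` C) ^ (r + \<rho> - 1) * q ^ (card (R - S) * r)"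
proof -
  let ?N = "r + \<rho> - 1" and ?t = "card (R - S)"
  have "finite R" "finite C"
    using assms(1,2) finite_words finite_subset by blast+
  then have "?t \<le> ?N"
    using assms(3) card_mono[of R "R - S"] by auto
  have "card (proj_on (S \<union> R) ` C) ^ ?N \<le> (card (proj_on S ` C) * q ^ (?t + 1 - \<rho>)) ^ ?N"
    using assms \<open>finite R\<close> \<open>finite C\<close>
    by (intro power_mono card_proj_on_Un_le) (auto intro: words_nth_less)
  also have "\<dots> = card (proj_on S ` C) ^ ?N * q ^ ((?t + 1 - \<rho>) * ?N)"
    by (simp add: power_mult_distrib power_mult)
  also have "\<dots> \<le> card (proj_on S ` C) ^ ?N * q ^ (?t * r)"
    using \<open>0 < q\<close> repair_group_exponent_le[OF \<open>1 \<le> \<rho>\<close> \<open>?t \<le> ?N\<close>]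
    by (intro mult_left_mono power_increasing) auto
  finally show ?thesis .
qed

lemma card_pow_le_proj_on_LRC:
  assumes LRC: "is_LRC q n r \<rho> C" and "0 < q" and "1 \<le> \<rho>" and "S \<subseteq> {..<n}"
  shows "card C ^ (r + \<rho> - 1) \<le> card (proj_on S ` C) ^ (r + \<rho> - 1) * q ^ ((n - card S) * r)"
  using \<open>S \<subseteq> {..<n}\<close>
proof (induction "n - card S" arbitrary: S rule: less_induct)
  case less
  let ?N = "r + \<rho> - 1"
  have words: "C \<subseteq> words q n"
    using LRC by (simp add: is_LRC_def is_code_def)
  show ?case
  proof (cases "S = {..<n}")
    case True
    have "card (proj_on S ` C) = card C"
      unfolding True using inj_on_proj_on_words words by (intro card_image) (rule inj_on_subset)
    then show ?thesis
      using \<open>0 < q\<close> by simp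
  next
    case False
    then obtain i where "i < n" "i \<notin> S"
      using less.prems by auto
    then obtain R where R: "i \<in> R" "R \<subseteq> {..<n}" "card R \<le> ?N"
      and dist: "\<forall>x\<in>C. \<forall>y\<in>C. hdist_on R x y \<noteq> 0 \<longrightarrow> \<rho> \<le> hdist_on R x y"
      using LRC unfolding is_LRC_def by blast
    define t where "t = card (R - S)"
    have "finite R" "finite S"
      using R(2) less.prems finite_subset by blast+
    then have card_Un: "card (S \<union> R) = card S + t"
      unfolding t_def using card_Un_disjoint[of S "R - S"] by (simp add: Un_Diff_cancel)
    have "t \<noteq> 0"
      unfolding t_def using R(1) \<open>i \<notin> S\<close> \<open>finite R\<close> by auto
    have "S \<union> R \<subseteq> {..<n}"
      using R(2) less.prems by blast
    then have "card (S \<union> R) \<le> n"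
      using card_mono[of "{..<n}" "S \<union> R"] by simp
    then have IH: "card C ^ ?N \<le> card (proj_on (S \<union> R) ` C) ^ ?N * q ^ ((n - card (S \<union> R)) * r)"
      using less.hyps[of "S \<union> R"] \<open>S \<union> R \<subseteq> {..<n}\<close> card_Un \<open>t \<noteq> 0\<close> by simp
    also have "\<dots> \<le> card (proj_on S ` C) ^ ?N * q ^ (t * r) * q ^ ((n - card (S \<union> R)) * r)"
      unfolding t_def using words R(2,3) \<open>0 < q\<close> \<open>1 \<le> \<rho>\<close> dist
      by (intro mult_right_mono card_proj_on_Un_pow_le) auto
    also have "\<dots> = card (proj_on S ` C) ^ ?N * q ^ ((n - card S) * r)"
      using card_Un \<open>card (S \<union> R) \<le> n\<close>
      by (simp add: mult.assoc power_add[symmetric] add_mult_distrib[symmetric])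
    finally show ?thesis .
  qed
qed

lemma card_LRC_pow_le:
  assumes "is_LRC q n r \<rho> C" and "0 < q" and "1 \<le> \<rho>"
  shows "card C ^ (r + \<rho> - 1) \<le> q ^ (n * r)"
proof -
  have "proj_on {} ` C \<subseteq> {proj_on {} []}"
    by (auto simp: proj_on_eq_iff)
  then have "card (proj_on {} ` C) \<le> 1"
    using card_mono[of "{proj_on {} []}"] by simp
  then have "card (proj_on {} ` C) ^ (r + \<rho> - 1) \<le> 1"
    by (intro power_le_one) auto
  then show ?thesis
    using card_pow_le_proj_on_LRC[OF assms, of "{}"] mult_right_mono[of _ 1 "q ^ (n * r)"]
    by (simp add: le_trans)
qed

lemma nth_concat_block:
  assumes "\<forall>x\<in>set xs. length x = N" and "j < length xs" and "l < N"
  shows "concat xs ! (j * N + l) = xs ! j ! l"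
  using assms
proof (induction xs arbitrary: j)
  case (Cons x xs)
  then show ?case
    by (cases j) (auto simp: nth_append add.assoc)
qed simp

lemma hdist_on_concat_block:
  assumes "\<forall>x\<in>set xs. length x = N" and "\<forall>y\<in>set ys. length y = N"
    and "j < length xs" and "j < length ys"
  shows "hdist_on {j * N..<j * N + N} (concat xs) (concat ys) = hdist (xs ! j) (ys ! j)"
proof -
  have "{k \<in> {j * N..<j * N + N}. concat xs ! k \<noteq> concat ys ! k}
      = (\<lambda>l. j * N + l) ` {l \<in> {..<N}. xs ! j ! l \<noteq> ys ! j ! l}"
  proof (intro equalityI subsetI)
    fix k assume k: "k \<in> {k \<in> {j * N..<j * N + N}. concat xs ! k \<noteq> concat ys ! k}"
    define l where "l = k - j * N"
    have "k = j * N + l" "l < N"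
      using k by (auto simp: l_def)
    moreover have "xs ! j ! l \<noteq> ys ! j ! l"
      using k \<open>l < N\<close> by (simp add: \<open>k = j * N + l\<close> nth_concat_block[OF assms(1,3)] nth_concat_block[OF assms(2,4)])
    ultimately show "k \<in> (\<lambda>l. j * N + l) ` {l \<in> {..<N}. xs ! j ! l \<noteq> ys ! j ! l}"
      by blast
  next
    fix k assume "k \<in> (\<lambda>l. j * N + l) ` {l \<in> {..<N}. xs ! j ! l \<noteq> ys ! j ! l}"
    then obtain l where "k = j * N + l" "l < N" "xs ! j ! l \<noteq> ys ! j ! l"
      by blast
    then show "k \<in> {k \<in> {j * N..<j * N + N}. concat xs ! k \<noteq> concat ys ! k}"
      by (simp add: nth_concat_block[OF assms(1,3)] nth_concat_block[OF assms(2,4)])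
  qed
  then have "hdist_on {j * N..<j * N + N} (concat xs) (concat ys) = card {l \<in> {..<N}. xs ! j ! l \<noteq> ys ! j ! l}"
    unfolding hdist_on_def by (simp add: card_image)
  also have "\<dots> = hdist (xs ! j) (ys ! j)"
    using assms(1,3) by (simp add: hdist_def hdist_on_def)
  finally show ?thesis .
qed

definition concat_code :: "nat list set \<Rightarrow> nat \<Rightarrow> nat list set" where
  "concat_code C m = concat ` {xs. set xs \<subseteq> C \<and> length xs = m}"

lemma card_concat_code:
  assumes "finite C" and "\<forall>x\<in>C. length x = N"
  shows "card (concat_code C m) = card C ^ m"
proof -
  have "inj_on concat {xs. set xs \<subseteq> C \<and> length xs = m}"
  proof (rule inj_onI)
    fix xs ys assume "xs \<in> {xs. set xs \<subseteq> C \<and> length xs = m}" "ys \<in> {xs. set xs \<subseteq> C \<and> length xs = m}"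
      and "concat xs = concat ys"
    then show "xs = ys"
      using assms(2) by (intro concat_injective) (auto 4 3 dest: set_zip_leftD set_zip_rightD)
  qed
  then show ?thesis
    unfolding concat_code_def using card_lists_length_eq[OF assms(1)] by (simp add: card_image)
qed

lemma concat_code_is_LRC:
  assumes "C \<subseteq> words q N" and "C \<noteq> {}" and "0 < N" and "N \<le> r + \<rho> - 1"
    and dist: "\<forall>x\<in>C. \<forall>y\<in>C. x \<noteq> y \<longrightarrow> \<rho> \<le> hdist x y"
  shows "is_LRC q (m * N) r \<rho> (concat_code C m)"
proof -
  have len: "\<forall>x\<in>C. length x = N"
    using assms(1) by (auto simp: words_def)
  have "concat_code C m \<subseteq> words q (m * N)"
  proof
    fix z assume "z \<in> concat_code C m"
    then obtain xs where "set xs \<subseteq> C" "length xs = m" "z = concat xs"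
      by (auto simp: concat_code_def)
    moreover have "sum_list (map length xs) = length xs * N" if "set xs \<subseteq> C" for xs
      using that len by (induction xs) auto
    ultimately show "z \<in> words q (m * N)"
      using assms(1) by (auto simp: words_def length_concat)
  qed
  moreover obtain c where "c \<in> C"
    using \<open>C \<noteq> {}\<close> by blast
  then have "concat (replicate m c) \<in> concat_code C m"
    by (auto simp: concat_code_def)
  moreover have "\<exists>R. i \<in> R \<and> R \<subseteq> {..<m * N} \<and> card R \<le> r + \<rho> - 1 \<and>
      (\<forall>x\<in>concat_code C m. \<forall>y\<in>concat_code C m. hdist_on R x y \<noteq> 0 \<longrightarrow> \<rho> \<le> hdist_on R x y)"
    if "i < m * N" for i
  proof (intro exI conjI)
    define j where "j = i div N"
    show "i \<in> {j * N..<j * N + N}"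
      using div_mult_mod_eq[of i N] mod_less_divisor[OF \<open>0 < N\<close>, of i] unfolding j_def atLeastLessThan_iff by linarith
    show "card {j * N..<j * N + N} \<le> r + \<rho> - 1"
      using \<open>N \<le> r + \<rho> - 1\<close> by simp
    have "j < m"
      using that \<open>0 < N\<close> by (simp add: j_def less_mult_imp_div_less)
    then show "{j * N..<j * N + N} \<subseteq> {..<m * N}"
      by (auto dest: mult_le_mono1[of "Suc j" m N, OF Suc_leI])
    show "\<forall>x\<in>concat_code C m. \<forall>y\<in>concat_code C m.
        hdist_on {j * N..<j * N + N} x y \<noteq> 0 \<longrightarrow> \<rho> \<le> hdist_on {j * N..<j * N + N} x y"
    proof (intro ballI impI)
      fix x y assume "x \<in> concat_code C m" "y \<in> concat_code C m"
        and nonzero: "hdist_on {j * N..<j * N + N} x y \<noteq> 0"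
      then obtain xs ys where xs: "set xs \<subseteq> C" "length xs = m" "x = concat xs"
        and ys: "set ys \<subseteq> C" "length ys = m" "y = concat ys"
        by (auto simp: concat_code_def)
      have block: "hdist_on {j * N..<j * N + N} x y = hdist (xs ! j) (ys ! j)"
        unfolding xs(3) ys(3) by (rule hdist_on_concat_block) (use len xs ys \<open>j < m\<close> in auto)
      then have "xs ! j \<noteq> ys ! j"
        using nonzero by (auto simp: hdist_def hdist_on_def)
      moreover have "xs ! j \<in> C" "ys ! j \<in> C"
        using nth_mem[of j xs] nth_mem[of j ys] xs ys \<open>j < m\<close> by auto
      ultimately show "\<rho> \<le> hdist_on {j * N..<j * N + N} x y"
        unfolding block using dist by simp
    qed
  qed
  ultimately show ?thesis
    unfolding is_LRC_def is_code_def by blast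
qed

lemma MDS_dist_ge:
  assumes "is_MDS q N \<rho> C" and "x \<in> C" and "y \<in> C" and "x \<noteq> y"
  shows "\<rho> \<le> hdist x y"
proof -
  have "finite C"
    using assms(1) finite_words finite_subset by (auto simp: is_MDS_def is_code_def)
  then have "finite {hdist x y | x y. x \<in> C \<and> y \<in> C \<and> x \<noteq> y}"
    using finite_image_set2[of "\<lambda>x. x \<in> C" "\<lambda>y. y \<in> C" hdist]
    by (rule_tac finite_subset[rotated]) auto
  then have "min_dist C \<le> hdist x y"
    unfolding min_dist_def using assms(2-4) by (intro Min_le) auto
  then show ?thesis
    using assms(1) by (simp add: is_MDS_def)
qed

lemma singleton_is_LRC:
  assumes "0 < q" and "1 \<le> r" and "1 \<le> \<rho>"
  shows "is_LRC q n r \<rho> {replicate n 0}"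
proof -
  have "\<exists>R. i \<in> R \<and> R \<subseteq> {..<n} \<and> card R \<le> r + \<rho> - 1 \<and>
      (\<forall>x\<in>{replicate n 0}. \<forall>y\<in>{replicate n 0}. hdist_on R x y \<noteq> 0 \<longrightarrow> \<rho> \<le> hdist_on R x y)"
    if "i < n" for i
    using that assms by (intro exI[of _ "{i}"]) (auto simp: hdist_on_def)
  then show ?thesis
    using assms by (auto simp: is_LRC_def is_code_def words_def)
qed

lemma card_le_M_LRC:
  assumes "is_LRC q n r \<rho> C" and "min_dist_ge d C"
  shows "card C \<le> M_LRC q n r \<rho> d"
proof -
  have "{C. is_LRC q n r \<rho> C \<and> min_dist_ge d C} \<subseteq> Pow (words q n)"
    by (auto simp: is_LRC_def is_code_def)
  then have "finite {C. is_LRC q n r \<rho> C \<and> min_dist_ge d C}"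
    using finite_words finite_subset by blast
  then show ?thesis
    unfolding M_LRC_def using assms by (intro Max_ge) auto
qed

lemma M_LRC_attained:
  assumes "0 < q" and "1 \<le> r" and "1 \<le> \<rho>"
  obtains C where "is_LRC q n r \<rho> C" and "card C = M_LRC q n r \<rho> d"
proof -
  let ?codes = "{C. is_LRC q n r \<rho> C \<and> min_dist_ge d C}"
  have "?codes \<subseteq> Pow (words q n)"
    by (auto simp: is_LRC_def is_code_def)
  then have "finite ?codes"
    using finite_words finite_subset by blast
  moreover have "{replicate n 0} \<in> ?codes"
    using singleton_is_LRC[OF assms] by (simp add: min_dist_ge_def)
  ultimately have "M_LRC q n r \<rho> d \<in> card ` ?codes"
    unfolding M_LRC_def by (intro Max_in) auto
  then show ?thesis
    using that by auto
qed

lemma M_LRC_pow_le: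
  assumes "0 < q" and "1 \<le> r" and "1 \<le> \<rho>"
  shows "M_LRC q n r \<rho> d ^ (r + \<rho> - 1) \<le> q ^ (n * r)"
proof -
  obtain C where "is_LRC q n r \<rho> C" and "card C = M_LRC q n r \<rho> d"
    using M_LRC_attained[OF assms] .
  then show ?thesis
    using card_LRC_pow_le \<open>0 < q\<close> \<open>1 \<le> \<rho>\<close> by metis
qed

lemma M_LRC_MDS_length_multiple:
  assumes MDS: "is_MDS q N \<rho> C" and N: "N = r + \<rho> - 1" and "0 < q" and "1 \<le> r" and "1 \<le> \<rho>"
  shows "M_LRC q (m * N) r \<rho> 0 = q ^ (m * r)"
proof (rule antisym)
  have "0 < N"
    using N \<open>1 \<le> r\<close> \<open>1 \<le> \<rho>\<close> by simp
  have "M_LRC q (m * N) r \<rho> 0 ^ N \<le> (q ^ (m * r)) ^ N"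
    using M_LRC_pow_le[OF assms(3-5), of "m * N" 0] by (simp add: N power_mult[symmetric] mult_ac)
  then show "M_LRC q (m * N) r \<rho> 0 \<le> q ^ (m * r)"
    using \<open>0 < N\<close> by simp
next
  have "N - \<rho> + 1 = r"
    using N \<open>1 \<le> r\<close> by simp
  then have "C \<subseteq> words q N" and "card C = q ^ r"
    using MDS by (simp_all add: is_MDS_def is_code_def)
  moreover from this have "finite C"
    using finite_words finite_subset by blast
  ultimately have "C \<noteq> {}" and "\<forall>x\<in>C. length x = N"
    using \<open>0 < q\<close> by (auto simp: words_def)
  have "is_LRC q (m * N) r \<rho> (concat_code C m)"
    using \<open>C \<subseteq> words q N\<close> \<open>C \<noteq> {}\<close> MDS_dist_ge[OF MDS] N \<open>1 \<le> r\<close> \<open>1 \<le> \<rho>\<close>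
    by (intro concat_code_is_LRC) auto
  then have "card (concat_code C m) \<le> M_LRC q (m * N) r \<rho> 0"
    by (rule card_le_M_LRC) (simp add: min_dist_ge_def)
  then show "q ^ (m * r) \<le> M_LRC q (m * N) r \<rho> 0"
    using card_concat_code[OF \<open>finite C\<close> \<open>\<forall>x\<in>C. length x = N\<close>] \<open>card C = q ^ r\<close>
    by (simp add: power_mult[symmetric] mult.commute)
qed

lemma log_le_of_pow_le:
  fixes x b :: real
  assumes "1 < b" and "0 < x" and "0 < N" and "x ^ N \<le> b ^ k"
  shows "log b x \<le> k / N"
proof -
  have "N * log b x = log b (x ^ N)"
    using \<open>0 < x\<close> by (simp add: log_nat_power)
  also have "\<dots> \<le> log b (b ^ k)"
    using assms by (subst log_le_cancel_iff) auto
  also have "\<dots> = k"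
    using \<open>1 < b\<close> by simp
  finally show ?thesis
    using \<open>0 < N\<close> by (simp add: field_simps)
qed

lemma LRC_rate_le:
  assumes "2 \<le> q" and "1 \<le> r" and "1 \<le> \<rho>"
  shows "log q (M_LRC q n r \<rho> d) / n \<le> real r / real (r + \<rho> - 1)"
proof -
  have "M_LRC q n r \<rho> d ^ (r + \<rho> - 1) \<le> q ^ (n * r)"
    using assms by (intro M_LRC_pow_le) auto
  then have "real (M_LRC q n r \<rho> d) ^ (r + \<rho> - 1) \<le> real q ^ (n * r)"
    by (metis of_nat_le_iff of_nat_power)
  moreover have "1 \<le> M_LRC q n r \<rho> d"
    using card_le_M_LRC[OF singleton_is_LRC] assms by (simp add: min_dist_ge_def)
  ultimately have "log q (M_LRC q n r \<rho> d) \<le> real (n * r) / real (r + \<rho> - 1)"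
    using assms by (intro log_le_of_pow_le) auto
  then have "log q (M_LRC q n r \<rho> d) / n \<le> real (n * r) / real (r + \<rho> - 1) / n"
    by (rule divide_right_mono) simp
  then show ?thesis
    by (cases "n = 0") (simp_all del: of_nat_diff)
qed

lemma LRC_rate_MDS:
  assumes "is_MDS q N \<rho> C" and "N = r + \<rho> - 1" and "2 \<le> q" and "1 \<le> r" and "1 \<le> \<rho>" and "0 < m"
  shows "log q (M_LRC q (m * N) r \<rho> 0) / real (m * N) = real r / real N"
proof -
  have "log q (M_LRC q (m * N) r \<rho> 0) = m * r"
    using M_LRC_MDS_length_multiple[OF assms(1,2)] assms(3-5) by simp
  then show ?thesis
    using \<open>0 < m\<close> by simp
qed

lemma limsup_eq_if_bounded_and_attained:
  fixes a :: "nat \<Rightarrow> 'a::complete_linorder" and s :: "nat \<Rightarrow> nat"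
  assumes "\<And>n. a n \<le> c" and "strict_mono s" and "\<And>k. a (s k) = c"
  shows "limsup a = c"
proof (rule antisym)
  show "limsup a \<le> c"
    by (rule Limsup_bounded) (simp add: assms(1))
  have "limsup (a \<circ> s) = c"
    using assms(3) by (simp add: comp_def Limsup_const)
  then show "c \<le> limsup a"
    using limsup_subseq_mono[OF assms(2), of a] by simp
qed

theorem corollary2:
  fixes q r \<rho> :: nat
  assumes "q \<ge> 2" and "r \<ge> 1" and "\<rho> \<ge> 2"
    and "\<exists>C. is_MDS q (r + \<rho> - 1) \<rho> C"
  shows "R_LRC q r \<rho> 0 = ereal (real r / real (r + \<rho> - 1))"
proof -
  define N where "N = r + \<rho> - 1"
  obtain C where MDS: "is_MDS q N \<rho> C"
    using assms(4) unfolding N_def by blast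
  have "1 \<le> \<rho>" and "0 < N"
    using assms(2,3) by (auto simp: N_def)
  let ?rate = "\<lambda>n. ereal (log q (M_LRC q n r \<rho> 0) / n)"
  have "R_LRC q r \<rho> 0 = limsup ?rate"
    by (simp add: R_LRC_def)
  also have "\<dots> = ereal (r / N)"
  proof (rule limsup_eq_if_bounded_and_attained)
    show "?rate n \<le> ereal (r / N)" for n
      using LRC_rate_le[OF assms(1,2) \<open>1 \<le> \<rho>\<close>] by (simp add: N_def)
    show "strict_mono (\<lambda>k. Suc k * N)"
      using \<open>0 < N\<close> by (simp add: strict_mono_def)
    show "?rate (Suc k * N) = ereal (r / N)" for k
      by (simp only: LRC_rate_MDS[OF MDS N_def assms(1,2) \<open>1 \<le> \<rho>\<close> zero_less_Suc])
  qed
  finally show ?thesis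
    unfolding N_def .
qed

end
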